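(* Let $m\ge n$, let $\Omega$ be a convex subset of $M_{m\times n}(\mathbb{C})$, and let $\Omega_d$ be the set of matrices in $\Omega$ having distinct singular values. Then $\Omega_d$ is dense in $\Omega$ if and only if the closure $\overline{\Omega}$ contains a matrix having distinct singular values.
   Context: $M_{m\times n}(\mathbb{C})$ denotes the set of $m\times n$ complex matrices with the topology induced by the Frobenius norm; throughout $m\ge n$. The singular values of $A\in M_{m\times n}(\mathbb{C})$ are the $n$ nonnegative square roots of the eigenvalues of $A^{\ast}A$, counted with multiplicity; $A$ has distinct singular values if these $n$ values are pairwise different. *)

theory Defs
  imports "HOL-Analysis.Analysis" "HOL-Computational_Algebra.Fundamental_Theorem_Algebra"
begin

text \<open>m x n complex matrices are complex^'n^'m (rows indexed by 'm, columns by 'n);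
  the norm on this type is the Frobenius norm.\<close>

definition conj_transpose :: "complex^'n^'m \<Rightarrow> complex^'m^'n" where
  "conj_transpose A = (\<chi> i j. cnj (A $ j $ i))"

definition char_poly_mat :: "complex^'n^'n \<Rightarrow> complex poly" where
  "char_poly_mat B = det (\<chi> i j. (if i = j then [:0, 1:] else 0) - [:B $ i $ j:])"

definition singular_values :: "complex^'n^'m \<Rightarrow> real multiset" where
  "singular_values A =
     image_mset (\<lambda>z. sqrt (Re z)) (proots (char_poly_mat (conj_transpose A ** A)))"

definition distinct_singular_values :: "complex^'n^'m \<Rightarrow> bool" where
  "distinct_singular_values A \<longleftrightarrow> (\<forall>s. count (singular_values A) s \<le> 1)"

end

theory Submission
  imports Defs "Subresultants.Subresultant_Gcd" "HOL-Computational_Algebra.Field_as_Ring"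
begin

text \<open>Let \<open>D(A)\<close> be the discriminant (the resultant of \<open>p\<close> and \<open>p'\<close>) of the characteristic
  polynomial \<open>p\<close> of \<open>A\<^sup>* A\<close>. The eigenvalues of \<open>A\<^sup>* A\<close> are real, so \<open>A\<close> has distinct singular
  values iff \<open>p\<close> has no repeated root, i.e. iff \<open>D(A) \<noteq> 0\<close>. Since \<open>D\<close> is a polynomial in the
  entries of \<open>A\<close> and their conjugates, it is continuous, and along a segment
  \<open>t \<mapsto> (1 - t) B + t C\<close> it is a polynomial in the real parameter \<open>t\<close>.
  If \<open>D(A\<^sub>0) \<noteq> 0\<close> for some \<open>A\<^sub>0\<close> in the closure of \<open>\<Omega>\<close>, continuity gives \<open>C \<in> \<Omega>\<close> with
  \<open>D(C) \<noteq> 0\<close>. For \<open>B \<in> \<Omega>\<close>, the polynomial \<open>t \<mapsto> D((1 - t) B + t C)\<close> does not vanish at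
  \<open>t = 1\<close>, hence has only finitely many zeros, so \<open>B\<close> is a limit of points of the segment
  with \<open>D \<noteq> 0\<close>; by convexity they lie in \<open>\<Omega>\<close>.\<close>

no_notation Matrix.vec_index (infixl "$" 100)

section \<open>Rings of functions\<close>

locale fun_subring =
  fixes G :: "('x \<Rightarrow> 'b::comm_ring_1) set"
  assumes const_closed: "(\<lambda>x. c) \<in> G"
    and add_closed: "f \<in> G \<Longrightarrow> g \<in> G \<Longrightarrow> (\<lambda>x. f x + g x) \<in> G"
    and mult_closed: "f \<in> G \<Longrightarrow> g \<in> G \<Longrightarrow> (\<lambda>x. f x * g x) \<in> G"
begin

lemma diff_closed:
  assumes "f \<in> G" "g \<in> G"
  shows "(\<lambda>x. f x - g x) \<in> G"
proof -
  have "(\<lambda>x. f x + (-1) * g x) \<in> G"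
    by (intro add_closed mult_closed const_closed assms)
  then show ?thesis by simp
qed

lemma if_closed: "f \<in> G \<Longrightarrow> g \<in> G \<Longrightarrow> (\<lambda>x. if P then f x else g x) \<in> G"
  by (cases P) simp_all

lemma sum_closed: "(\<And>i. i \<in> S \<Longrightarrow> f i \<in> G) \<Longrightarrow> (\<lambda>x. \<Sum>i\<in>S. f i x) \<in> G"
  by (induction S rule: infinite_finite_induct) (simp_all add: const_closed add_closed)

lemma prod_closed: "(\<And>i. i \<in> S \<Longrightarrow> f i \<in> G) \<Longrightarrow> (\<lambda>x. \<Prod>i\<in>S. f i x) \<in> G"
  by (induction S rule: infinite_finite_induct) (simp_all add: const_closed mult_closed)

lemma det_closed:
  fixes M :: "'x \<Rightarrow> 'b^'n^'n"
  assumes "\<And>i j. (\<lambda>x. M x $ i $ j) \<in> G"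
  shows "(\<lambda>x. Determinants.det (M x)) \<in> G"
  unfolding Determinants.det_def
  by (intro sum_closed mult_closed const_closed prod_closed assms)

lemma mat_det_closed:
  assumes dim: "\<And>x. M x \<in> carrier_mat N N"
    and entries: "\<And>i j. i < N \<Longrightarrow> j < N \<Longrightarrow> (\<lambda>x. M x $$ (i, j)) \<in> G"
  shows "(\<lambda>x. Determinant.det (M x)) \<in> G"
proof -
  have "(\<lambda>x. \<Sum>p | p permutes {0..<N}. of_int (sign p) * (\<Prod>i = 0..<N. M x $$ (i, p i))) \<in> G"
    by (intro sum_closed mult_closed const_closed prod_closed entries)
      (auto simp: permutes_in_image)
  moreover have "Determinant.det (M x) =
      (\<Sum>p | p permutes {0..<N}. of_int (sign p) * (\<Prod>i = 0..<N. M x $$ (i, p i)))" for x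
    using dim[of x] by (auto simp: Determinant.det_def)
  ultimately show ?thesis
    by simp
qed

end

definition coeffwise :: "('x \<Rightarrow> 'b::zero) set \<Rightarrow> ('x \<Rightarrow> 'b poly) set" where
  "coeffwise G = {P. \<forall>k. (\<lambda>x. coeff (P x) k) \<in> G}"

lemma coeffwiseD: "P \<in> coeffwise G \<Longrightarrow> (\<lambda>x. coeff (P x) k) \<in> G"
  by (simp add: coeffwise_def)

context fun_subring
begin

lemma fun_subring_coeffwise: "fun_subring (coeffwise G)"
proof
  fix c :: "'b poly"
  show "(\<lambda>x. c) \<in> coeffwise G"
    by (simp add: coeffwise_def const_closed)
next
  fix P Q :: "'x \<Rightarrow> 'b poly"
  assume P: "P \<in> coeffwise G" and Q: "Q \<in> coeffwise G"
  then show "(\<lambda>x. P x + Q x) \<in> coeffwise G"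
    by (simp add: coeffwise_def add_closed)
  have "(\<lambda>x. \<Sum>i\<le>k. coeff (P x) i * coeff (Q x) (k - i)) \<in> G" for k
    by (intro sum_closed mult_closed coeffwiseD[OF P] coeffwiseD[OF Q])
  then show "(\<lambda>x. P x * Q x) \<in> coeffwise G"
    by (simp add: coeffwise_def coeff_mult)
qed

lemma const_poly_coeffwise:
  assumes "f \<in> G"
  shows "(\<lambda>x. [:f x:]) \<in> coeffwise G"
  unfolding coeffwise_def
proof (intro CollectI allI)
  show "(\<lambda>x. coeff [:f x:] k) \<in> G" for k
    by (cases k) (simp_all add: assms const_closed)
qed

lemma resultant_sub_closed:
  assumes P: "P \<in> coeffwise G" and Q: "Q \<in> coeffwise G"
  shows "(\<lambda>x. resultant_sub m n (P x) (Q x)) \<in> G"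
  unfolding resultant_sub_def
proof (rule mat_det_closed)
  show "sylvester_mat_sub m n (P x) (Q x) \<in> carrier_mat (m + n) (m + n)" for x
    by (simp add: sylvester_mat_sub_def)
  fix i j assume "i < m + n" "j < m + n"
  moreover have "(\<lambda>x. if i < n then if i \<le> j \<and> j - i \<le> m then coeff (P x) (m + i - j) else 0
      else if i - n \<le> j \<and> j \<le> i then coeff (Q x) (i - j) else 0) \<in> G"
    by (intro if_closed coeffwiseD[OF P] coeffwiseD[OF Q] const_closed)
  ultimately show "(\<lambda>x. sylvester_mat_sub m n (P x) (Q x) $$ (i, j)) \<in> G"
    by (simp add: sylvester_mat_sub_def)
qed

end

lemma pderiv_coeffwise:
  fixes G :: "('x \<Rightarrow> 'b::idom) set"
  assumes "fun_subring G" and "P \<in> coeffwise G"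
  shows "(\<lambda>x. pderiv (P x)) \<in> coeffwise G"
proof -
  interpret fun_subring G by fact
  show ?thesis
    by (simp add: coeffwise_def coeff_pderiv mult_closed const_closed coeffwiseD[OF assms(2)])
qed

lemma fun_subring_continuous:
  "fun_subring
    {f :: 'a::topological_space \<Rightarrow> 'b::{real_normed_algebra,comm_ring_1}. continuous_on UNIV f}"
  by unfold_locales (auto intro: continuous_intros)

definition real_poly_funs :: "(real \<Rightarrow> 'b::{comm_ring_1,real_algebra_1}) set" where
  "real_poly_funs = {f. \<exists>q. \<forall>t. f t = poly q (of_real t)}"

lemma fun_subring_real_poly_funs:
  "fun_subring (real_poly_funs :: (real \<Rightarrow> 'b::{comm_ring_1,real_algebra_1}) set)"
proof
  fix c :: 'b
  show "(\<lambda>t. c) \<in> real_poly_funs"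
    unfolding real_poly_funs_def by (auto intro!: exI[of _ "[:c:]"])
next
  fix f g :: "real \<Rightarrow> 'b"
  assume "f \<in> real_poly_funs" "g \<in> real_poly_funs"
  then obtain p q where "\<forall>t. f t = poly p (of_real t)" "\<forall>t. g t = poly q (of_real t)"
    by (auto simp: real_poly_funs_def)
  then show "(\<lambda>t. f t + g t) \<in> real_poly_funs" "(\<lambda>t. f t * g t) \<in> real_poly_funs"
    unfolding real_poly_funs_def by (auto intro: exI[of _ "p + q"] exI[of _ "p * q"])
qed

section \<open>Characteristic polynomials and Gram matrices\<close>

lemma char_poly_mat_eq_diag_plus_lower:
  fixes B :: "complex^'n^'n"
  obtains R where "char_poly_mat B = (\<Prod>i\<in>UNIV. [:- B $ i $ i, 1:]) + R"
    and "degree R < CARD('n)"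
proof -
  define E where "E = (\<chi> i j. (if i = j then [:0, 1:] else 0) - [:B $ i $ j:])"
  have E: "E $ i $ j = (if i = j then [:- B $ i $ j, 1:] else [:- B $ i $ j:])" for i j
    by (auto simp: E_def poly_eq_iff coeff_pCons split: nat.splits)
  define T where "T p = of_int (sign p) * (\<Prod>i\<in>UNIV. E $ i $ p i)" for p :: "'n \<Rightarrow> 'n"
  define P where "P = {p. p permutes (UNIV :: 'n set)}"
  have "char_poly_mat B = (\<Sum>p\<in>P. T p)"
    unfolding char_poly_mat_def Determinants.det_def E_def[symmetric] T_def P_def ..
  also have "\<dots> = T id + (\<Sum>p\<in>P - {id}. T p)"
    by (rule sum.remove) (simp_all add: P_def finite_permutations permutes_id)
  also have "T id = (\<Prod>i\<in>UNIV. [:- B $ i $ i, 1:])"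
    by (simp add: T_def E)
  finally have split: "char_poly_mat B = (\<Prod>i\<in>UNIV. [:- B $ i $ i, 1:]) + (\<Sum>p\<in>P - {id}. T p)" .
  have "degree (T p) < CARD('n)" if "p \<noteq> id" for p
  proof -
    have "degree (T p) \<le> degree (\<Prod>i\<in>UNIV. E $ i $ p i)"
      unfolding T_def using degree_mult_le[of "of_int (sign p)"] by simp
    also have "\<dots> \<le> (\<Sum>i\<in>UNIV. degree (E $ i $ p i))"
      using degree_prod_sum_le[of UNIV "\<lambda>i. E $ i $ p i"] by (simp add: o_def)
    also have "\<dots> \<le> (\<Sum>i\<in>UNIV. if p i = i then 1 else 0)"
      by (intro sum_mono) (simp add: E)
    also have "\<dots> = card {i. p i = i}"
      by (simp add: sum.If_cases)
    also have "\<dots> < CARD('n)"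
      using that by (intro psubset_card_mono) (auto simp: fun_eq_iff)
    finally show ?thesis .
  qed
  then have "degree (\<Sum>p\<in>P - {id}. T p) < CARD('n)"
    by (intro degree_sum_less) auto
  with split show ?thesis
    using that by blast
qed

lemma degree_lead_coeff_char_poly_mat:
  fixes B :: "complex^'n^'n"
  shows "degree (char_poly_mat B) = CARD('n)" and "lead_coeff (char_poly_mat B) = 1"
proof -
  obtain R where R: "char_poly_mat B = (\<Prod>i\<in>UNIV. [:- B $ i $ i, 1:]) + R" "degree R < CARD('n)"
    by (rule char_poly_mat_eq_diag_plus_lower)
  have D: "degree (\<Prod>i\<in>(UNIV :: 'n set). [:- B $ i $ i, 1:]) = CARD('n)"
    by (subst degree_prod_eq_sum_degree) auto
  show "degree (char_poly_mat B) = CARD('n)"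
    using R D by (simp add: degree_add_eq_left)
  have "lead_coeff (char_poly_mat B) = lead_coeff (\<Prod>i\<in>UNIV. [:- B $ i $ i, 1:])"
    using R D by (metis add.commute lead_coeff_add_le)
  then show "lead_coeff (char_poly_mat B) = 1"
    by (simp add: lead_coeff_prod)
qed

lemma poly_det: "poly (Determinants.det P) z = Determinants.det (\<chi> i j. poly (P $ i $ j) z)"
  unfolding Determinants.det_def by (simp add: poly_sum poly_prod)

lemma poly_char_poly_mat:
  "poly (char_poly_mat H) z = Determinants.det (Finite_Cartesian_Product.mat z - H)"
  unfolding char_poly_mat_def poly_det
  by (rule arg_cong[where f = Determinants.det])
    (auto simp: Finite_Cartesian_Product.vec_eq_iff Finite_Cartesian_Product.mat_def)

lemma char_poly_mat_root_eigenvector: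
  fixes H :: "complex^'n^'n"
  assumes "poly (char_poly_mat H) z = 0"
  obtains v where "v \<noteq> 0" and "H *v v = z *s v"
proof -
  have "\<not> invertible (Finite_Cartesian_Product.mat z - H)"
    using assms by (simp add: poly_char_poly_mat invertible_det_nz)
  then obtain v where v: "v \<noteq> 0" "(Finite_Cartesian_Product.mat z - H) *v v = 0"
    by (metis invertible_left_inverse matrix_left_invertible_ker)
  have "Finite_Cartesian_Product.mat z *v v = z *s v"
    by (simp add: Finite_Cartesian_Product.vec_eq_iff matrix_vector_mult_def
        Finite_Cartesian_Product.mat_def if_distrib[where f = "\<lambda>a. a * b" for b]
        cong del: if_weak_cong)
  with v that show ?thesis
    by (simp add: matrix_vector_mult_diff_rdistrib)
qed

lemma conj_transpose_mult_quadratic_form: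
  fixes A :: "complex^'n^'m" and v :: "complex^'n"
  shows "(\<Sum>i\<in>UNIV. cnj (v $ i) * ((conj_transpose A ** A) *v v) $ i)
       = (\<Sum>k\<in>UNIV. cnj ((A *v v) $ k) * (A *v v) $ k)"
proof -
  define w where "w = A *v v"
  have Hv: "((conj_transpose A ** A) *v v) $ i = (\<Sum>k\<in>UNIV. cnj (A $ k $ i) * w $ k)" for i
    unfolding matrix_vector_mul_assoc[symmetric] w_def
    by (simp add: matrix_vector_mult_def conj_transpose_def)
  have "(\<Sum>i\<in>UNIV. cnj (v $ i) * ((conj_transpose A ** A) *v v) $ i)
      = (\<Sum>i\<in>UNIV. \<Sum>k\<in>UNIV. cnj (A $ k $ i * v $ i) * w $ k)"
    unfolding Hv sum_distrib_left by (simp add: mult_ac)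
  also have "\<dots> = (\<Sum>k\<in>UNIV. \<Sum>i\<in>UNIV. cnj (A $ k $ i * v $ i) * w $ k)"
    by (rule sum.swap)
  also have "\<dots> = (\<Sum>k\<in>UNIV. cnj (w $ k) * w $ k)"
    unfolding sum_distrib_right[symmetric] cnj_sum[symmetric]
    by (simp add: w_def matrix_vector_mult_def)
  finally show ?thesis
    unfolding w_def .
qed

lemma sum_cnj_mult_self: "(\<Sum>i\<in>UNIV. cnj (v $ i) * v $ i) = complex_of_real ((norm v)\<^sup>2)"
proof -
  have "(norm v)\<^sup>2 = (\<Sum>i\<in>UNIV. (cmod (v $ i))\<^sup>2)"
    by (simp add: norm_vec_def L2_set_def sum_nonneg)
  moreover have "cnj a * a = complex_of_real ((cmod a)\<^sup>2)" for a
    by (metis complex_norm_square mult.commute)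
  ultimately show ?thesis
    by (simp only: of_real_sum)
qed

lemma conj_transpose_mult_eigenvalue_real:
  fixes A :: "complex^'n^'m"
  assumes "v \<noteq> 0" and "(conj_transpose A ** A) *v v = z *s v"
  shows "z \<in> \<real>"
proof -
  have "z * complex_of_real ((norm v)\<^sup>2) = (\<Sum>i\<in>UNIV. cnj (v $ i) * (z * v $ i))"
    unfolding sum_cnj_mult_self[symmetric] sum_distrib_left by (simp add: mult_ac)
  also have "\<dots> = (\<Sum>k\<in>UNIV. cnj ((A *v v) $ k) * (A *v v) $ k)"
    using conj_transpose_mult_quadratic_form[of v A] by (simp add: assms(2))
  also have "\<dots> = complex_of_real ((norm (A *v v))\<^sup>2)"
    by (rule sum_cnj_mult_self)
  finally have "z = complex_of_real ((norm (A *v v))\<^sup>2 / (norm v)\<^sup>2)"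
    using assms(1) by (simp add: field_simps)
  then show ?thesis
    by simp
qed

section \<open>Distinct singular values and the discriminant\<close>

lemma count_image_mset_le_one_iff:
  assumes "inj_on f (set_mset M)"
  shows "(\<forall>y. count (image_mset f M) y \<le> 1) \<longleftrightarrow> (\<forall>x. count M x \<le> 1)"
proof -
  have img: "count (image_mset f M) (f x) = count M x" if "x \<in># M" for x
  proof -
    have "{x'. x' \<in># M \<and> f x = f x'} = {x}"
      using assms that by (auto dest: inj_onD)
    then show ?thesis
      by (simp add: count_image_mset')
  qed
  show ?thesis
  proof (intro iffI allI)
    fix x
    assume le: "\<forall>y. count (image_mset f M) y \<le> 1"
    show "count M x \<le> 1"
    proof (cases "x \<in># M")
      case True
      then show ?thesis
        using img le by metis
    next
      case False
      then show ?thesis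
        by (simp add: not_in_iff)
    qed
  next
    fix y
    assume le: "\<forall>x. count M x \<le> 1"
    show "count (image_mset f M) y \<le> 1"
    proof (cases "y \<in># image_mset f M")
      case True
      then obtain x where "x \<in># M" "y = f x"
        by auto
      then show ?thesis
        using img le by simp
    next
      case False
      then have "count (image_mset f M) y = 0"
        by (simp only: not_in_iff)
      then show ?thesis
        by simp
    qed
  qed
qed

lemma resultant_eq_0_iff_common_root:
  fixes f g :: "complex poly"
  assumes "f \<noteq> 0"
  shows "resultant f g = 0 \<longleftrightarrow> (\<exists>z. poly f z = 0 \<and> poly g z = 0)"
proof -
  have "resultant f g = 0 \<longleftrightarrow> degree (gcd f g) \<noteq> 0"
    by (rule resultant_0_gcd)
  also have "\<dots> \<longleftrightarrow> (\<exists>z. poly (gcd f g) z = 0)"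
  proof
    assume "degree (gcd f g) \<noteq> 0"
    then show "\<exists>z. poly (gcd f g) z = 0"
      by (intro fundamental_theorem_of_algebra) (simp add: constant_degree)
  next
    assume "\<exists>z. poly (gcd f g) z = 0"
    then obtain z where "[:-z, 1:] dvd gcd f g"
      by (auto simp: poly_eq_0_iff_dvd)
    moreover have "gcd f g \<noteq> 0"
      using assms by simp
    ultimately have "degree [:-z, 1:] \<le> degree (gcd f g)"
      by (rule dvd_imp_degree_le)
    then show "degree (gcd f g) \<noteq> 0"
      by simp
  qed
  also have "\<dots> \<longleftrightarrow> (\<exists>z. poly f z = 0 \<and> poly g z = 0)"
    by (simp add: poly_eq_0_iff_dvd)
  finally show ?thesis .
qed

definition gram_char_poly :: "complex^'n^'m \<Rightarrow> complex poly" where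
  "gram_char_poly A = char_poly_mat (conj_transpose A ** A)"

lemma gram_char_poly_nonzero: "gram_char_poly A \<noteq> 0"
  using degree_lead_coeff_char_poly_mat(2)[of "conj_transpose A ** A"]
  by (auto simp: gram_char_poly_def)

lemma gram_char_poly_root_real:
  assumes "poly (gram_char_poly A) z = 0"
  shows "z \<in> \<real>"
  using assms unfolding gram_char_poly_def
  by (metis char_poly_mat_root_eigenvector conj_transpose_mult_eigenvalue_real)

text \<open>Isabelle's \<open>sqrt\<close> is odd on negative arguments, hence injective on all of \<open>\<real>\<close>:
  only the reality of the eigenvalues of \<open>A\<^sup>* A\<close> is needed, not their nonnegativity.\<close>

lemma distinct_singular_values_iff_rsquarefree:
  "distinct_singular_values A \<longleftrightarrow> rsquarefree (gram_char_poly A)"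
proof -
  let ?p = "gram_char_poly A"
  have "inj_on (\<lambda>z. sqrt (Re z)) (set_mset (proots ?p))"
  proof (rule inj_onI)
    fix z w
    assume "z \<in># proots ?p" "w \<in># proots ?p" and eq: "sqrt (Re z) = sqrt (Re w)"
    then have "z \<in> \<real>" "w \<in> \<real>"
      using gram_char_poly_nonzero set_count_proots by (auto intro: gram_char_poly_root_real)
    with eq show "z = w"
      by (simp add: complex_eq_iff complex_is_Real_iff)
  qed
  then have "distinct_singular_values A \<longleftrightarrow> (\<forall>z. count (proots ?p) z \<le> 1)"
    unfolding distinct_singular_values_def singular_values_def gram_char_poly_def[symmetric]
    by (rule count_image_mset_le_one_iff)
  also have "\<dots> \<longleftrightarrow> rsquarefree ?p"
    using gram_char_poly_nonzero by (auto simp: rsquarefree_def le_Suc_eq)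
  finally show ?thesis .
qed

text \<open>The degrees of the two polynomials are fixed in advance, so that the Sylvester matrix
  has the same shape for every \<open>A\<close> and its entries are coefficients of \<open>gram_char_poly A\<close>.\<close>

definition sv_discriminant :: "complex^'n^'m \<Rightarrow> complex" where
  "sv_discriminant A =
     resultant_sub CARD('n) (CARD('n) - 1) (gram_char_poly A) (pderiv (gram_char_poly A))"

lemma sv_discriminant_eq_resultant:
  "sv_discriminant A = resultant (gram_char_poly A) (pderiv (gram_char_poly A))"
  by (simp add: sv_discriminant_def resultant_sub degree_pderiv gram_char_poly_def
      degree_lead_coeff_char_poly_mat)

lemma distinct_singular_values_iff_sv_discriminant:
  "distinct_singular_values A \<longleftrightarrow> sv_discriminant A \<noteq> 0"
  by (simp add: distinct_singular_values_iff_rsquarefree sv_discriminant_eq_resultant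
      resultant_eq_0_iff_common_root gram_char_poly_nonzero rsquarefree_roots)

lemma sv_discriminant_closed:
  fixes M :: "'x \<Rightarrow> complex^'n^'m"
  assumes "fun_subring G"
    and entries: "\<And>i j. (\<lambda>x. M x $ i $ j) \<in> G"
    and conj_entries: "\<And>i j. (\<lambda>x. cnj (M x $ i $ j)) \<in> G"
  shows "(\<lambda>x. sv_discriminant (M x)) \<in> G"
proof -
  interpret fun_subring G by fact
  interpret coeffs: fun_subring "coeffwise G"
    by (rule fun_subring_coeffwise)
  have "(\<lambda>x. (conj_transpose (M x) ** M x) $ i $ j) \<in> G" for i j
    unfolding matrix_matrix_mult_def conj_transpose_def
    by (simp add: sum_closed mult_closed entries conj_entries)
  then have "(\<lambda>x. gram_char_poly (M x)) \<in> coeffwise G"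
    unfolding gram_char_poly_def char_poly_mat_def
    by (simp add: coeffs.det_closed coeffs.diff_closed coeffs.const_closed const_poly_coeffwise)
  then show ?thesis
    unfolding sv_discriminant_def
    by (intro resultant_sub_closed pderiv_coeffwise[OF assms(1)])
qed

lemma continuous_on_sv_discriminant: "continuous_on UNIV sv_discriminant"
  using sv_discriminant_closed[OF fun_subring_continuous, of "\<lambda>A. A"]
  by (simp add: continuous_intros)

lemma sv_discriminant_segment_poly:
  fixes B C :: "complex^'n^'m"
  shows "\<exists>q. \<forall>t. sv_discriminant ((1 - t) *\<^sub>R B + t *\<^sub>R C) = poly q (of_real t)"
proof -
  have entry: "((1 - t) *\<^sub>R B + t *\<^sub>R C) $ i $ j
      = poly [:B $ i $ j, C $ i $ j - B $ i $ j:] (of_real t)" for t i j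
  proof -
    have scaleR_complex: "r *\<^sub>R (x::complex) = of_real r * x" for r x
      by (rule scaleR_conv_of_real)
    show ?thesis
      by (simp only: vector_add_component vector_scaleR_component scaleR_complex)
        (simp add: algebra_simps)
  qed
  have "(\<lambda>t. sv_discriminant ((1 - t) *\<^sub>R B + t *\<^sub>R C)) \<in> real_poly_funs"
  proof (rule sv_discriminant_closed[OF fun_subring_real_poly_funs])
    fix i j
    show "(\<lambda>t. ((1 - t) *\<^sub>R B + t *\<^sub>R C) $ i $ j) \<in> real_poly_funs"
      unfolding real_poly_funs_def entry by blast
    show "(\<lambda>t. cnj (((1 - t) *\<^sub>R B + t *\<^sub>R C) $ i $ j)) \<in> real_poly_funs"
      unfolding real_poly_funs_def entry
      by (auto intro!: exI[of _ "[:cnj (B $ i $ j), cnj (C $ i $ j - B $ i $ j):]"])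
  qed
  then show ?thesis
    by (simp add: real_poly_funs_def)
qed

section \<open>Density in convex sets\<close>

lemma convex_subset_closure_nonvanishing:
  fixes f :: "'a::real_normed_vector \<Rightarrow> 'b::{idom,real_algebra_1}"
  assumes "convex \<Omega>" and "C \<in> \<Omega>" and "f C \<noteq> 0"
    and segment_poly: "\<And>B. B \<in> \<Omega> \<Longrightarrow> \<exists>q. \<forall>t. f ((1 - t) *\<^sub>R B + t *\<^sub>R C) = poly q (of_real t)"
  shows "\<Omega> \<subseteq> closure {A \<in> \<Omega>. f A \<noteq> 0}"
proof
  fix B
  assume "B \<in> \<Omega>"
  then obtain q where q: "\<And>t. f ((1 - t) *\<^sub>R B + t *\<^sub>R C) = poly q (of_real t)"
    using segment_poly by blast
  have "q \<noteq> 0"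
    using q[of 1] \<open>f C \<noteq> 0\<close> by auto
  then have "finite (of_real -` {z. poly q z = 0} :: real set)"
    by (intro finite_vimageI poly_roots_finite inj_of_real)
  then have "\<not> 0 islimpt (of_real -` {z. poly q z = 0} :: real set)"
    by (rule islimpt_finite)
  then have "\<forall>\<^sub>F t in at_right 0. poly q (of_real t) \<noteq> 0"
    by (auto simp: islimpt_iff_eventually eventually_at_split)
  moreover have "\<forall>\<^sub>F t in at_right (0::real). 0 < t \<and> t < 1"
    by (auto simp: eventually_at_right_field intro: exI[of _ 1])
  ultimately have "\<forall>\<^sub>F t in at_right 0. (1 - t) *\<^sub>R B + t *\<^sub>R C \<in> {A \<in> \<Omega>. f A \<noteq> 0}"
    by eventually_elim (auto simp: q intro!: convexD[OF \<open>convex \<Omega>\<close> \<open>B \<in> \<Omega>\<close> \<open>C \<in> \<Omega>\<close>])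
  then have "\<forall>\<^sub>F t in at_right 0. (1 - t) *\<^sub>R B + t *\<^sub>R C \<in> closure {A \<in> \<Omega>. f A \<noteq> 0}"
    by (rule eventually_mono) (auto intro: closure_subset[THEN subsetD])
  moreover have "((\<lambda>t. (1 - t) *\<^sub>R B + t *\<^sub>R C) \<longlongrightarrow> (1 - 0) *\<^sub>R B + 0 *\<^sub>R C) (at_right 0)"
    by (intro tendsto_intros)
  ultimately show "B \<in> closure {A \<in> \<Omega>. f A \<noteq> 0}"
    by (intro Lim_in_closed_set[OF closed_closure]) simp_all
qed

theorem corollary3p15:
  fixes \<Omega> :: "(complex^'n^'m) set"
  assumes "CARD('n) \<le> CARD('m)"
    and "convex \<Omega>"
    and "\<Omega> \<noteq> {}"
  shows "\<Omega> \<subseteq> closure {A \<in> \<Omega>. distinct_singular_values A}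
     \<longleftrightarrow> (\<exists>A \<in> closure \<Omega>. distinct_singular_values A)"
proof
  assume "\<Omega> \<subseteq> closure {A \<in> \<Omega>. distinct_singular_values A}"
  with \<open>\<Omega> \<noteq> {}\<close> have "{A \<in> \<Omega>. distinct_singular_values A} \<noteq> {}"
    by (metis closure_empty subset_empty)
  then show "\<exists>A \<in> closure \<Omega>. distinct_singular_values A"
    using closure_subset by blast
next
  assume "\<exists>A \<in> closure \<Omega>. distinct_singular_values A"
  then have "{A. sv_discriminant A \<noteq> 0} \<inter> closure \<Omega> \<noteq> {}"
    by (auto simp: distinct_singular_values_iff_sv_discriminant)
  moreover have "open {A. sv_discriminant A \<noteq> 0}"
    by (intro open_Collect_neq continuous_on_sv_discriminant continuous_on_const)
  ultimately obtain C where "C \<in> \<Omega>" and "sv_discriminant C \<noteq> 0"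
    using open_Int_closure_eq_empty by blast
  then have "\<Omega> \<subseteq> closure {A \<in> \<Omega>. sv_discriminant A \<noteq> 0}"
    using convex_subset_closure_nonvanishing[OF \<open>convex \<Omega>\<close>] sv_discriminant_segment_poly
    by blast
  then show "\<Omega> \<subseteq> closure {A \<in> \<Omega>. distinct_singular_values A}"
    by (simp add: distinct_singular_values_iff_sv_discriminant)
qed

end
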